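(* Let $D$ be a strong asymmetrical digraph with $D\in\mathcal{LE}_3$. Then $\chi_o(D)\leq 6$.
   Context: All digraphs are finite, without loops or multiple arcs. A digraph is asymmetrical if it has no pair of opposite arcs $(u,v),(v,u)$. For an asymmetrical digraph $D$, an oriented $k$-colouring is a proper colouring $V(D)\to\{1,\ldots,k\}$ (vertices joined by an arc get distinct colours) such that all arcs between any two colour classes have the same direction; the oriented chromatic number $\chi_o(D)$ is the least such $k$, equivalently the least order of a tournament $T$ admitting a homomorphism (arc-preserving vertex map) from $D$ to $T$. Paths and cycles are directed; the length of a path or cycle is its number of arcs. A digraph is strong if for every ordered pair of vertices $x,y$ there is a directed path from $x$ to $y$. For a subdigraph $H$ of a digraph $D$, an ear of $H$ in $D$ is either a directed path in $D$ whose two end vertices lie in $H$ and whose internal vertices do not lie in $H$, or a directed cycle in $D$ having exactly one vertex in $H$. An ear decomposition of a strong digraph $D$ is a sequence $(D_0,D_1,\ldots,D_k)$ of strong subdigraphs of $D$ such that $D_0$ is a directed cycle, $D_{j+1}=D_j\cup P_j$ where $P_j$ is an ear of $D_j$ in $D$ for every $j\in\{0,\ldots,k-1\}$, and $D_k=D$. For an integer $i\geq 1$, $\mathcal{LE}_i$ denotes the family of strong digraphs having an ear decomposition in which every ear has length at least $i$. *)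

theory Defs
  imports Main
begin

definition digraph :: "'a set \<Rightarrow> ('a \<times> 'a) set \<Rightarrow> bool" where
  "digraph V A \<longleftrightarrow> finite V \<and> A \<subseteq> V \<times> V \<and> (\<forall>v. (v, v) \<notin> A)"

definition asymmetrical :: "('a \<times> 'a) set \<Rightarrow> bool" where
  "asymmetrical A \<longleftrightarrow> (\<forall>u v. (u, v) \<in> A \<longrightarrow> (v, u) \<notin> A)"

definition strong :: "'a set \<Rightarrow> ('a \<times> 'a) set \<Rightarrow> bool" where
  "strong V A \<longleftrightarrow> (\<forall>x\<in>V. \<forall>y\<in>V. (x, y) \<in> A\<^sup>*)"

definition oriented_colouring :: "'a set \<Rightarrow> ('a \<times> 'a) set \<Rightarrow> nat \<Rightarrow> ('a \<Rightarrow> nat) \<Rightarrow> bool" where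
  "oriented_colouring V A k c \<longleftrightarrow>
     c ` V \<subseteq> {1..k} \<and>
     (\<forall>(u, v) \<in> A. c u \<noteq> c v) \<and>
     (\<forall>(u, v) \<in> A. \<forall>(x, y) \<in> A. \<not> (c u = c y \<and> c v = c x))"

definition oriented_chromatic_number :: "'a set \<Rightarrow> ('a \<times> 'a) set \<Rightarrow> nat" where
  "oriented_chromatic_number V A = (LEAST k. \<exists>c. oriented_colouring V A k c)"

text \<open>Walks are represented by vertex lists; arcs are consecutive pairs.\<close>
definition walk_arcs :: "'a list \<Rightarrow> ('a \<times> 'a) set" where
  "walk_arcs vs = set (zip vs (tl vs))"

definition walk_length :: "'a list \<Rightarrow> nat" where
  "walk_length vs = length vs - 1"

definition is_dipath :: "('a \<times> 'a) set \<Rightarrow> 'a list \<Rightarrow> bool" where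
  "is_dipath A vs \<longleftrightarrow> length vs \<ge> 2 \<and> distinct vs \<and> walk_arcs vs \<subseteq> A"

text \<open>Directed cycle given as a closed vertex list v0 v1 ... v(n-1) v0 (n \<ge> 2 distinct
  vertices) with all arcs in A.\<close>
definition is_dicycle :: "('a \<times> 'a) set \<Rightarrow> 'a list \<Rightarrow> bool" where
  "is_dicycle A vs \<longleftrightarrow> length vs \<ge> 3 \<and> hd vs = last vs \<and> distinct (tl vs) \<and> walk_arcs vs \<subseteq> A"

definition is_ear :: "('a \<times> 'a) set \<Rightarrow> 'a set \<Rightarrow> 'a list \<Rightarrow> bool" where
  "is_ear A VH vs \<longleftrightarrow>
     (is_dipath A vs \<and> hd vs \<in> VH \<and> last vs \<in> VH \<and> (\<forall>v \<in> set (butlast (tl vs)). v \<notin> VH))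
   \<or> (is_dicycle A vs \<and> card (set vs \<inter> VH) = 1)"

definition ED_V :: "'a list \<Rightarrow> 'a list list \<Rightarrow> nat \<Rightarrow> 'a set" where
  "ED_V c0 es j = set c0 \<union> (\<Union>i<j. set (es ! i))"

definition ED_A :: "'a list \<Rightarrow> 'a list list \<Rightarrow> nat \<Rightarrow> ('a \<times> 'a) set" where
  "ED_A c0 es j = walk_arcs c0 \<union> (\<Union>i<j. walk_arcs (es ! i))"

definition ear_decomposition :: "'a set \<Rightarrow> ('a \<times> 'a) set \<Rightarrow> 'a list \<Rightarrow> 'a list list \<Rightarrow> bool" where
  "ear_decomposition V A c0 es \<longleftrightarrow>
     is_dicycle A c0 \<and>
     (\<forall>j \<le> length es. strong (ED_V c0 es j) (ED_A c0 es j)) \<and>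
     (\<forall>j < length es. is_ear A (ED_V c0 es j) (es ! j)) \<and>
     ED_V c0 es (length es) = V \<and> ED_A c0 es (length es) = A"

definition LE :: "nat \<Rightarrow> 'a set \<Rightarrow> ('a \<times> 'a) set \<Rightarrow> bool" where
  "LE i V A \<longleftrightarrow> strong V A \<and>
     (\<exists>c0 es. ear_decomposition V A c0 es \<and> (\<forall>e \<in> set es. walk_length e \<ge> i))"

end

theory Submission
  imports Defs
begin

text \<open>Fix a tournament \<open>T\<^sub>6\<close> on six vertices in which every vertex reaches every vertex,
  itself included, by a walk of length exactly 3, hence (every vertex having an out-neighbour)
  by walks of every length \<open>n \<ge> 3\<close>. Homomorphisms into \<open>T\<^sub>6\<close> are built along the ear
  decomposition: an ear of length \<open>n \<ge> 3\<close> whose ends already have colours \<open>a\<close> and \<open>b\<close>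
  (\<open>a = b\<close> for a cyclic ear) gets its interior coloured along a walk of length \<open>n\<close> from \<open>a\<close>
  to \<open>b\<close>; the initial cycle is a cyclic ear of any one of its vertices and has length at
  least 3 by asymmetry. A homomorphism into an asymmetric digraph on six vertices is an oriented
  6-colouring.\<close>

lemma walk_arcs_Nil [simp]: "walk_arcs [] = {}"
  by (simp add: walk_arcs_def)

lemma walk_arcs_singleton [simp]: "walk_arcs [x] = {}"
  by (simp add: walk_arcs_def)

lemma walk_arcs_Cons_Cons [simp]: "walk_arcs (x # y # zs) = insert (x, y) (walk_arcs (y # zs))"
  by (simp add: walk_arcs_def)

lemma walk_arcs_append: "walk_arcs (xs @ y # ys) = walk_arcs (xs @ [y]) \<union> walk_arcs (y # ys)"
  by (induction xs rule: induct_list012) auto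

lemma walk_arcs_subset: "walk_arcs vs \<subseteq> set vs \<times> set vs"
  by (induction vs rule: induct_list012) auto

lemma walk_arcs_butlast_Domain: "set (butlast vs) \<subseteq> Domain (walk_arcs vs)"
  by (induction vs rule: induct_list012) auto

definition is_hom :: "'a set \<Rightarrow> ('a \<times> 'a) set \<Rightarrow> 'b set \<Rightarrow> ('b \<times> 'b) set \<Rightarrow> ('a \<Rightarrow> 'b) \<Rightarrow> bool" where
  "is_hom V A W T c \<longleftrightarrow> c ` V \<subseteq> W \<and> (\<forall>(p, q) \<in> A. (c p, c q) \<in> T)"

lemma oriented_colouring_if_hom:
  assumes "asymmetrical T" and "is_hom V A {1..k} T c"
  shows "oriented_colouring V A k c"
  using assms unfolding oriented_colouring_def is_hom_def asymmetrical_def by fastforce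

lemma oriented_chromatic_number_le_if_hom:
  assumes "asymmetrical T" and "is_hom V A {1..k} T c"
  shows "oriented_chromatic_number V A \<le> k"
  unfolding oriented_chromatic_number_def
  using oriented_colouring_if_hom[OF assms] by (blast intro: Least_le)

lemma relpow_full_mono:
  assumes T: "T \<subseteq> W \<times> W" and full: "W \<times> W \<subseteq> T ^^ k" and "0 < k" and "k \<le> n"
  shows "W \<times> W \<subseteq> T ^^ n"
  using \<open>k \<le> n\<close>
proof (induction n rule: dec_induct)
  case base
  show ?case by (fact full)
next
  case (step n)
  show ?case
  proof clarify
    fix a b assume "a \<in> W" "b \<in> W"
    from \<open>0 < k\<close> obtain k' where "k = Suc k'" by (cases k) auto
    with \<open>a \<in> W\<close> full obtain a' where "(a, a') \<in> T"
      by (blast dest: relpow_Suc_D2)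
    with T step.IH \<open>b \<in> W\<close> show "(a, b) \<in> T ^^ Suc n"
      by (blast intro: relpow_Suc_I2)
  qed
qed

lemma path_hom_extends:
  assumes "distinct xs" "u \<notin> set xs" "v \<notin> set xs" "(c u, c v) \<in> T ^^ Suc (length xs)"
  shows "\<exists>c'. (\<forall>y. y \<notin> set xs \<longrightarrow> c' y = c y) \<and>
              (\<forall>(p, q) \<in> walk_arcs (u # xs @ [v]). (c' p, c' q) \<in> T)"
  using assms
proof (induction xs arbitrary: u c)
  case Nil
  then show ?case by auto
next
  case (Cons x xs)
  from relpow_Suc_D2[OF Cons.prems(4)] obtain m
    where um: "(c u, m) \<in> T" and mv: "(m, c v) \<in> T ^^ Suc (length xs)"
    by auto
  have "x \<noteq> v" using Cons.prems(3) by auto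
  with Cons.prems mv obtain c' where
    agree: "\<forall>y. y \<notin> set xs \<longrightarrow> c' y = (c(x := m)) y" and
    arcs: "\<forall>(p, q) \<in> walk_arcs (x # xs @ [v]). (c' p, c' q) \<in> T"
    using Cons.IH[of x "c(x := m)"] by auto
  have "c' u = c u" "c' x = m" using agree Cons.prems(1,2) by auto
  with agree arcs um show ?case by (intro exI[of _ c']) auto
qed

lemma dicycle_walk_length_ge_3:
  assumes "is_dicycle A vs" and "asymmetrical A"
  shows "walk_length vs \<ge> 3"
proof (rule ccontr)
  assume "\<not> walk_length vs \<ge> 3"
  with assms(1) have "length vs = 3" by (auto simp: walk_length_def is_dicycle_def)
  then obtain a b c where "vs = [a, b, c]"
    by (auto simp: numeral_3_eq_3 length_Suc_conv)
  with assms show False by (auto simp: is_dicycle_def asymmetrical_def)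
qed

lemma dicycle_rotate:
  assumes "is_dicycle A vs" and "w \<in> set vs"
  obtains xs where "distinct xs" "w \<notin> set xs" "set vs = insert w (set xs)"
    "walk_arcs vs = walk_arcs (w # xs @ [w])" "length vs = length xs + 2"
proof -
  from assms(1) obtain a ys where vs: "vs = a # ys" and ys: "ys \<noteq> []" "last ys = a" "distinct ys"
    by (cases vs) (auto simp: is_dicycle_def split: if_splits)
  have "set vs = set ys" using vs ys by (auto intro: last_in_set)
  with assms(2) have "w \<in> set ys" by simp
  then obtain ys1 ys2 where split: "ys = ys1 @ w # ys2" by (blast dest: split_list)
  show thesis
  proof (cases "ys2 = []")
    case True
    with vs ys(2) split have "vs = w # ys1 @ [w]" by simp
    with ys(3) split show thesis by (intro that[of ys1]) auto
  next
    case False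
    with ys(2) split obtain ys2' where "ys2 = ys2' @ [a]"
      by (cases ys2 rule: rev_cases) auto
    with vs split have vs': "vs = (a # ys1) @ w # ys2' @ [a]" by simp
    let ?xs = "ys2' @ a # ys1"
    have "walk_arcs vs = walk_arcs (w # ys2' @ [a]) \<union> walk_arcs (a # ys1 @ [w])"
      using walk_arcs_append[of "a # ys1" w "ys2' @ [a]"] vs' by auto
    also have "\<dots> = walk_arcs (w # ?xs @ [w])"
      using walk_arcs_append[of "w # ys2'" a "ys1 @ [w]"] by simp
    moreover have "distinct ?xs" "w \<notin> set ?xs" using ys(3) split \<open>ys2 = ys2' @ [a]\<close> by auto
    moreover have "set vs = insert w (set ?xs)" "length vs = length ?xs + 2" using vs' by auto
    ultimately show thesis by (intro that[of ?xs]) simp_all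
  qed
qed

lemma ear_as_path:
  assumes "is_ear A VH vs"
  obtains u xs v where "u \<in> VH" "v \<in> VH" "distinct xs" "set xs \<inter> VH = {}"
    "set vs = insert u (insert v (set xs))" "walk_arcs vs = walk_arcs (u # xs @ [v])"
    "walk_length vs = Suc (length xs)"
  using assms unfolding is_ear_def
proof (elim disjE conjE)
  assume path: "is_dipath A vs" and ends: "hd vs \<in> VH" "last vs \<in> VH"
    and inner: "\<forall>v \<in> set (butlast (tl vs)). v \<notin> VH"
  from path obtain u xs v where vs: "vs = u # xs @ [v]"
    by (cases vs rule: rev_cases; cases "butlast vs") (auto simp: is_dipath_def)
  with path ends inner show thesis
    by (intro that[of u v xs]) (auto simp: is_dipath_def walk_length_def)
next
  assume cycle: "is_dicycle A vs" and "card (set vs \<inter> VH) = 1"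
  then obtain w where w: "set vs \<inter> VH = {w}" by (meson card_1_singletonE)
  with cycle obtain xs where "distinct xs" "w \<notin> set xs" "set vs = insert w (set xs)"
    "walk_arcs vs = walk_arcs (w # xs @ [w])" "length vs = length xs + 2"
    by (elim dicycle_rotate) auto
  with w show thesis by (intro that[of w w xs]) (auto simp: walk_length_def)
qed

lemma ear_hom_extends:
  assumes ear: "is_ear A VH vs" and len: "walk_length vs \<ge> k"
    and T: "T \<subseteq> W \<times> W" and full: "\<forall>n \<ge> k. W \<times> W \<subseteq> T ^^ n" and c: "c ` VH \<subseteq> W"
  shows "\<exists>c'. (\<forall>x \<in> VH. c' x = c x) \<and> c' ` set vs \<subseteq> W \<and>
              (\<forall>(p, q) \<in> walk_arcs vs. (c' p, c' q) \<in> T)"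
proof -
  obtain u xs v where uv: "u \<in> VH" "v \<in> VH" and xs: "distinct xs" "set xs \<inter> VH = {}"
    and vs: "set vs = insert u (insert v (set xs))" "walk_arcs vs = walk_arcs (u # xs @ [v])"
    "walk_length vs = Suc (length xs)"
    using ear by (rule ear_as_path)
  have "W \<times> W \<subseteq> T ^^ Suc (length xs)" using full len vs(3) by (simp del: relpow.simps)
  then have "(c u, c v) \<in> T ^^ Suc (length xs)" using c uv by blast
  with xs uv obtain c' where agree: "\<forall>y. y \<notin> set xs \<longrightarrow> c' y = c y"
    and arcs: "\<forall>(p, q) \<in> walk_arcs (u # xs @ [v]). (c' p, c' q) \<in> T"
    using path_hom_extends[of xs u v c T] by auto
  have "c' ` set xs \<subseteq> W"
  proof
    fix y assume "y \<in> c' ` set xs"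
    then obtain x where "x \<in> set (butlast (u # xs @ [v]))" "y = c' x"
      by (auto simp: butlast_append)
    with walk_arcs_butlast_Domain arcs T show "y \<in> W" by fast
  qed
  with agree xs uv c have "c' ` set vs \<subseteq> W" using vs(1) by auto
  moreover have "\<forall>x \<in> VH. c' x = c x" using agree xs(2) by blast
  ultimately show ?thesis using arcs vs(2) by (intro exI[of _ c']) simp
qed

lemma ED_V_Suc: "ED_V c0 es (Suc j) = ED_V c0 es j \<union> set (es ! j)"
  by (auto simp: ED_V_def lessThan_Suc)

lemma ED_A_Suc: "ED_A c0 es (Suc j) = ED_A c0 es j \<union> walk_arcs (es ! j)"
  by (auto simp: ED_A_def lessThan_Suc)

lemma ED_A_subset: "ED_A c0 es j \<subseteq> ED_V c0 es j \<times> ED_V c0 es j"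
  using walk_arcs_subset unfolding ED_A_def ED_V_def by fast

lemma ear_decomposition_stage_hom:
  assumes ed: "ear_decomposition V A c0 es" and "j \<le> length es"
    and len0: "walk_length c0 \<ge> k" and len: "\<forall>e \<in> set es. walk_length e \<ge> k"
    and T: "T \<subseteq> W \<times> W" and full: "\<forall>n \<ge> k. W \<times> W \<subseteq> T ^^ n" and "w \<in> W"
  shows "\<exists>c. is_hom (ED_V c0 es j) (ED_A c0 es j) W T c"
  using \<open>j \<le> length es\<close>
proof (induction j)
  case 0
  from ed have cycle: "is_dicycle A c0" by (simp add: ear_decomposition_def)
  then have "hd c0 \<in> set c0" by (cases c0) (auto simp: is_dicycle_def)
  with cycle have "is_ear A {hd c0} c0" by (auto simp: is_ear_def)
  from ear_hom_extends[OF this len0 T full, of "\<lambda>_. w"] \<open>w \<in> W\<close>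
  show ?case by (auto simp: is_hom_def ED_V_def ED_A_def)
next
  case (Suc j)
  then obtain c where c: "is_hom (ED_V c0 es j) (ED_A c0 es j) W T c" by auto
  from Suc.prems ed len have ear: "is_ear A (ED_V c0 es j) (es ! j)" "walk_length (es ! j) \<ge> k"
    by (auto simp: ear_decomposition_def)
  have "c ` ED_V c0 es j \<subseteq> W" using c by (simp add: is_hom_def)
  from ear_hom_extends[OF ear T full this] obtain c' where
    agree: "\<forall>x \<in> ED_V c0 es j. c' x = c x" and
    new: "c' ` set (es ! j) \<subseteq> W" "\<forall>(p, q) \<in> walk_arcs (es ! j). (c' p, c' q) \<in> T"
    by blast
  have old: "(c' p, c' q) \<in> T" if "(p, q) \<in> ED_A c0 es j" for p q
  proof -
    have "p \<in> ED_V c0 es j" "q \<in> ED_V c0 es j" using that ED_A_subset by blast+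
    with agree c that show ?thesis by (auto simp: is_hom_def)
  qed
  have "c' ` ED_V c0 es j \<subseteq> W" using agree c by (auto simp: is_hom_def)
  with new old have "is_hom (ED_V c0 es (Suc j)) (ED_A c0 es (Suc j)) W T c'"
    unfolding is_hom_def ED_V_Suc ED_A_Suc by blast
  then show ?case by blast
qed

lemma ear_decomposition_hom:
  assumes ed: "ear_decomposition V A c0 es"
    and "walk_length c0 \<ge> k" and "\<forall>e \<in> set es. walk_length e \<ge> k"
    and "T \<subseteq> W \<times> W" and "\<forall>n \<ge> k. W \<times> W \<subseteq> T ^^ n" and "W \<noteq> {}"
  shows "\<exists>c. is_hom V A W T c"
proof -
  from \<open>W \<noteq> {}\<close> obtain w where "w \<in> W" by blast
  with ear_decomposition_stage_hom[OF ed order.refl assms(2-5)] ed show ?thesis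
    by (simp add: ear_decomposition_def)
qed

definition T6 :: "(nat \<times> nat) set" where
  "T6 = {(1,5), (1,6), (2,1), (2,4), (3,1), (3,2), (3,6), (4,1), (4,3), (4,5),
         (5,2), (5,3), (6,2), (6,4), (6,5)}"

lemma T6_subset: "T6 \<subseteq> {1..6} \<times> {1..6}"
  by (auto simp: T6_def)

lemma asymmetrical_T6: "asymmetrical T6"
  by (auto simp: T6_def asymmetrical_def)

lemma T6_relcomp_3: "T6 O T6 O T6 = {1..6} \<times> {1..6}"
  unfolding T6_def by code_simp

lemma T6_relpow_3: "T6 ^^ 3 = {1..6} \<times> {1..6}"
proof -
  have "T6 ^^ 3 = T6 O T6 O T6" by (simp add: numeral_3_eq_3 O_assoc)
  with T6_relcomp_3 show ?thesis by simp
qed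

lemma T6_relpow_ge_3: "\<forall>n \<ge> 3. {1..6} \<times> {1..6} \<subseteq> T6 ^^ n"
  using relpow_full_mono[OF T6_subset equalityD2[OF T6_relpow_3]] by simp

theorem mainTheorem18:
  fixes V :: "'a set" and A :: "('a \<times> 'a) set"
  assumes "digraph V A" and "asymmetrical A" and "strong V A" and "LE 3 V A"
  shows "oriented_chromatic_number V A \<le> 6"
proof -
  from \<open>LE 3 V A\<close> obtain c0 es where ed: "ear_decomposition V A c0 es"
    and ears: "\<forall>e \<in> set es. walk_length e \<ge> 3"
    by (auto simp: LE_def)
  from ed \<open>asymmetrical A\<close> have "walk_length c0 \<ge> 3"
    by (auto simp: ear_decomposition_def intro: dicycle_walk_length_ge_3)
  then obtain c where "is_hom V A {1..6} T6 c"
    using ear_decomposition_hom[OF ed _ ears T6_subset T6_relpow_ge_3] by fastforce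
  with asymmetrical_T6 show ?thesis by (rule oriented_chromatic_number_le_if_hom)
qed

end
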